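(* Let $V=\{1,\dots,n\}$ be partitioned into $P_1,\dots,P_J$. For each realization $z$ let $r_{i,z}\in[0,1]$, $i\in V$, with $\sum_{i}r_{i,z}=1$, and let $f_z(\mathbf{x})=\sum_{j=1}^J h\big(\sum_{i\in P_j}r_{i,z}x_i\big)$ for $\mathbf{x}\in\{0,1\}^n$, with $h(s)=\log(1+s)$. Let $\hat h^L(s)=\sum_{\ell=0}^L\frac{h^{(\ell)}(1/2)}{\ell!}(s-1/2)^\ell$ and $\hat f_z^L(\mathbf{x})=\sum_{j=1}^J\hat h^L\big(\sum_{i\in P_j}r_{i,z}x_i\big)$. Let $G_z$ be the multilinear relaxation of $f_z$ and $\widehat{\nabla G_z^L}$ the polynomial estimator built from $\hat f_z^L$. Then for all $\mathbf{y}\in[0,1]^n$, $$\big\|\nabla G_z(\mathbf{y})-\widehat{\nabla G_z^L}(\mathbf{y})\big\|_2\le\frac{\sqrt n}{(L+1)2^L}.$$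
   Context: $G_z(\mathbf{y})=\mathbb{E}_{\mathbf{x}\sim\mathbf{y}}[f_z(\mathbf{x})]$ where $\mathbf{x}\sim\mathbf{y}$ has independent Bernoulli$(y_i)$ coordinates. For a polynomial $p(\mathbf{y})=c_0+\sum_\ell c_\ell\prod_{i\in J_\ell}y_i^{k_i^\ell}$ ($k_i^\ell\ge1$), its multilinearization is $\dot p(\mathbf{y})=c_0+\sum_\ell c_\ell\prod_{i\in J_\ell}y_i$. The polynomial estimator is $\big(\widehat{\nabla G_z^L}(\mathbf{y})\big)_i=\dot{\hat f}{}_z^L([\mathbf{y}]_{+i})-\dot{\hat f}{}_z^L([\mathbf{y}]_{-i})$, where $[\mathbf{y}]_{+i}$, $[\mathbf{y}]_{-i}$ denote $\mathbf{y}$ with coordinate $i$ set to $1$, $0$. *)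

theory Defs
  imports "HOL-Analysis.Analysis" "HOL-Library.Poly_Mapping"
begin

text \<open>Multivariate real polynomials in variables x_i (i :: nat), represented as
  finitely supported maps from monomials (exponent vectors) to coefficients.\<close>
type_synonym mpoly = "(nat \<Rightarrow>\<^sub>0 nat) \<Rightarrow>\<^sub>0 real"

definition mp_const :: "real \<Rightarrow> mpoly" where
  "mp_const c = Poly_Mapping.single 0 c"

definition mp_var :: "nat \<Rightarrow> mpoly" where
  "mp_var i = Poly_Mapping.single (Poly_Mapping.single i 1) 1"

text \<open>Evaluation of the multilinearization: every monomial prod_i x_i^(k_i) with
  k_i >= 1 for i in its support is replaced by prod_{i in support} y_i.\<close>
definition multilin_eval :: "mpoly \<Rightarrow> (nat \<Rightarrow> real) \<Rightarrow> real" where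
  "multilin_eval p y = (\<Sum>m\<in>Poly_Mapping.keys p. Poly_Mapping.lookup p m * (\<Prod>i\<in>Poly_Mapping.keys m. y i))"

definition h :: "real \<Rightarrow> real" where
  "h s = ln (1 + s)"

definition taylor_coeff :: "nat \<Rightarrow> real" where
  "taylor_coeff l = (deriv ^^ l) h (1/2) / fact l"

definition h_hat :: "nat \<Rightarrow> real \<Rightarrow> real" where
  "h_hat L s = (\<Sum>l = 0..L. taylor_coeff l * (s - 1/2) ^ l)"

definition f_obj :: "nat \<Rightarrow> (nat \<Rightarrow> nat set) \<Rightarrow> (nat \<Rightarrow> real) \<Rightarrow> (nat \<Rightarrow> real) \<Rightarrow> real" where
  "f_obj J P r x = (\<Sum>j = 1..J. h (\<Sum>i\<in>P j. r i * x i))"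

definition f_hat_poly :: "nat \<Rightarrow> nat \<Rightarrow> (nat \<Rightarrow> nat set) \<Rightarrow> (nat \<Rightarrow> real) \<Rightarrow> mpoly" where
  "f_hat_poly L J P r = (\<Sum>j = 1..J. \<Sum>l = 0..L.
      mp_const (taylor_coeff l) *
      ((\<Sum>i\<in>P j. mp_const (r i) * mp_var i) - mp_const (1/2)) ^ l)"

text \<open>Multilinear relaxation G(y) = E_{x ~ y}[f(x)], x with independent Bernoulli(y_i)
  coordinates, i in V; x is encoded by the set S of coordinates equal to 1.\<close>
definition multilinear_relaxation ::
  "nat set \<Rightarrow> ((nat \<Rightarrow> real) \<Rightarrow> real) \<Rightarrow> (nat \<Rightarrow> real) \<Rightarrow> real" where
  "multilinear_relaxation V f y =
     (\<Sum>S\<in>Pow V. (\<Prod>i\<in>S. y i) * (\<Prod>i\<in>V - S. 1 - y i) * f (\<lambda>i. if i \<in> S then 1 else 0))"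

definition partial :: "nat \<Rightarrow> ((nat \<Rightarrow> real) \<Rightarrow> real) \<Rightarrow> (nat \<Rightarrow> real) \<Rightarrow> real" where
  "partial i F y = deriv (\<lambda>t. F (y(i := t))) (y i)"

definition poly_grad_est :: "mpoly \<Rightarrow> nat \<Rightarrow> (nat \<Rightarrow> real) \<Rightarrow> real" where
  "poly_grad_est p i y = multilin_eval p (y(i := 1)) - multilin_eval p (y(i := 0))"

end

theory Submission
  imports Defs
begin

text \<open>
  Both the gradient of the multilinear relaxation G and the polynomial estimator are expected
  marginal gains. G is affine in each coordinate, so dG/dy_i (y) = E[f(x + e_i) - f(x)] for
  x ~ y on V - {i}; and the multilinearization of a polynomial is the multilinear relaxation of
  its restriction to {0,1}^n, so the estimator is the same expectation with \hat f^L in place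
  of f. On {0,1}^n the error f - \hat f^L is the sum over the blocks of (h - \hat h^L)(s_j) with
  s_j in [0,1], and adding i to x changes only the block containing i. Taylor's theorem with
  |h^(L+1)| <= L! on [0,1] bounds each such term by 1/((L+1) 2^(L+1)), so every coordinate
  of the error is at most 1/((L+1) 2^L), and its Euclidean norm at most sqrt n times that.
\<close>

section \<open>Taylor approximation of h\<close>

definition h_higher_deriv :: "nat \<Rightarrow> real \<Rightarrow> real" where
  "h_higher_deriv m s = (if m = 0 then ln (1 + s) else (-1) ^ (m - 1) * fact (m - 1) / (1 + s) ^ m)"

lemma has_field_derivative_h_higher_deriv:
  assumes "s > -1"
  shows "(h_higher_deriv m has_field_derivative h_higher_deriv (Suc m) s) (at s)"
proof (cases m)
  case 0
  then show ?thesis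
    using assms by (auto simp: h_higher_deriv_def[abs_def] intro!: derivative_eq_intros)
next
  case (Suc k)
  define c :: real where "c = (-1) ^ k * fact k"
  have "1 + s \<noteq> 0" using assms by simp
  have "((\<lambda>s. c / (1 + s) ^ Suc k) has_field_derivative
         - c * (real (Suc k) * (1 + s) ^ k) / ((1 + s) ^ Suc k) ^ 2) (at s)"
    using \<open>1 + s \<noteq> 0\<close>
    by (intro derivative_eq_intros DERIV_pow[THEN DERIV_chain2]) (auto simp: power2_eq_square)
  also have "- c * (real (Suc k) * (1 + s) ^ k) / ((1 + s) ^ Suc k) ^ 2
           = (-1) ^ Suc k * fact (Suc k) / (1 + s) ^ Suc (Suc k)"
    using \<open>1 + s \<noteq> 0\<close> by (simp add: c_def fact_Suc power2_eq_square)
  finally show ?thesis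
    unfolding Suc h_higher_deriv_def[abs_def] c_def by simp
qed

lemma iterated_deriv_h: "s > -1 \<Longrightarrow> (deriv ^^ m) h s = h_higher_deriv m s"
proof (induction m arbitrary: s)
  case 0
  show ?case by (simp add: h_def h_higher_deriv_def)
next
  case (Suc m)
  have "\<forall>\<^sub>F x in nhds s. (deriv ^^ m) h x = h_higher_deriv m x"
    using eventually_nhds_in_open[of "{-1<..}" s] Suc by (auto elim!: eventually_mono)
  then have "(deriv ^^ Suc m) h s = deriv (h_higher_deriv m) s"
    by (simp add: deriv_cong_ev)
  also have "\<dots> = h_higher_deriv (Suc m) s"
    using has_field_derivative_h_higher_deriv[OF Suc.prems] by (rule DERIV_imp_deriv)
  finally show ?case .
qed

lemma has_field_derivative_iterated_deriv_h:
  assumes "s > -1"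
  shows "((deriv ^^ m) h has_field_derivative (deriv ^^ Suc m) h s) (at s)"
proof -
  have "((deriv ^^ m) h has_field_derivative h_higher_deriv (Suc m) s) (at s)"
    using has_field_derivative_h_higher_deriv[OF assms]
    by (rule has_field_derivative_transform_within_open[of _ _ _ "{-1<..}"])
       (use assms iterated_deriv_h in auto)
  then show ?thesis
    using iterated_deriv_h[OF assms, of "Suc m"] by simp
qed

lemma h_hat_error_bound:
  assumes "0 \<le> s" "s \<le> 1"
  shows "\<bar>h s - h_hat L s\<bar> \<le> 1 / (real (L + 1) * 2 ^ (L + 1))"
proof (cases "s = 1/2")
  case True
  show ?thesis
    unfolding True by (simp add: h_hat_def taylor_coeff_def sum.atLeast_Suc_atMost)
next
  case False
  have h_hat_Taylor: "h_hat L s = (\<Sum>m<L + 1. (deriv ^^ m) h (1/2) / fact m * (s - 1/2) ^ m)"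
    unfolding h_hat_def taylor_coeff_def by (simp add: atLeast0AtMost lessThan_Suc_atMost)
  have "\<exists>t. (if s < 1/2 then s < t \<and> t < 1/2 else 1/2 < t \<and> t < s) \<and>
      h s = (\<Sum>m<L + 1. (deriv ^^ m) h (1/2) / fact m * (s - 1/2) ^ m)
            + (deriv ^^ (L + 1)) h t / fact (L + 1) * (s - 1/2) ^ (L + 1)"
    by (rule Taylor) (use assms False has_field_derivative_iterated_deriv_h in auto)
  then obtain t where t_between: "if s < 1/2 then s < t \<and> t < 1/2 else 1/2 < t \<and> t < s"
    and Taylor_expansion: "h s = h_hat L s
          + (deriv ^^ (L + 1)) h t / fact (L + 1) * (s - 1/2) ^ (L + 1)"
    unfolding h_hat_Taylor by blast
  have "t > 0"
    using t_between assms by (auto split: if_splits)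
  have remainder: "h s - h_hat L s = (deriv ^^ (L + 1)) h t / fact (L + 1) * (s - 1/2) ^ (L + 1)"
    using Taylor_expansion by simp
  have "(deriv ^^ (L + 1)) h t / fact (L + 1) = (-1) ^ L / (real (L + 1) * (1 + t) ^ (L + 1))"
    using \<open>t > 0\<close> iterated_deriv_h[of t "L + 1"]
    by (simp add: h_higher_deriv_def fact_Suc del: of_nat_Suc)
  then have "\<bar>h s - h_hat L s\<bar> = 1 / real (L + 1) * (1 / (1 + t) ^ (L + 1)) * \<bar>s - 1/2\<bar> ^ (L + 1)"
    using \<open>t > 0\<close> by (simp add: remainder abs_mult abs_divide power_abs)
  also have "\<dots> \<le> 1 / real (L + 1) * 1 * (1/2) ^ (L + 1)"
  proof (intro mult_left_mono mult_mono power_mono)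
    show "1 / (1 + t) ^ (L + 1) \<le> 1"
      using \<open>t > 0\<close> one_le_power[of "1 + t" "L + 1"] by simp
    show "\<bar>s - 1/2\<bar> \<le> 1/2"
      using assms by (auto simp: abs_if)
  qed auto
  also have "\<dots> = 1 / (real (L + 1) * 2 ^ (L + 1))"
    by (simp add: power_divide)
  finally show ?thesis .
qed

section \<open>Multilinearization\<close>

lemma multilin_eval_zero [simp]: "multilin_eval 0 x = 0"
  by (simp add: multilin_eval_def)

lemma multilin_eval_add: "multilin_eval (p + q) x = multilin_eval p x + multilin_eval q x"
  unfolding multilin_eval_def by (rule setsum_keys_plus_distrib) (auto simp: algebra_simps)

lemma multilin_eval_uminus: "multilin_eval (- p) x = - multilin_eval p x"
  by (simp add: multilin_eval_def sum_negf)

lemma multilin_eval_diff: "multilin_eval (p - q) x = multilin_eval p x - multilin_eval q x"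
  using multilin_eval_add[of p "- q" x] by (simp add: multilin_eval_uminus)

lemma multilin_eval_sum: "multilin_eval (\<Sum>j\<in>A. p j) x = (\<Sum>j\<in>A. multilin_eval (p j) x)"
  by (induction A rule: infinite_finite_induct) (auto simp: multilin_eval_add)

lemma multilin_eval_single:
  "multilin_eval (Poly_Mapping.single m c) x = c * (\<Prod>i\<in>Poly_Mapping.keys m. x i)"
  by (simp add: multilin_eval_def)

lemma multilin_eval_const: "multilin_eval (mp_const c) x = c"
  by (simp add: mp_const_def multilin_eval_single)

lemma multilin_eval_var: "multilin_eval (mp_var i) x = x i"
  by (simp add: mp_var_def multilin_eval_single)

lemma poly_mapping_eq_sum_single:
  "p = (\<Sum>a\<in>Poly_Mapping.keys p. Poly_Mapping.single a (Poly_Mapping.lookup p a))"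
  by (rule poly_mapping_eqI)
     (auto simp: lookup_sum lookup_single when_def in_keys_iff sum.delta')

lemma keys_add_nat:
  "Poly_Mapping.keys (a + b :: 'a \<Rightarrow>\<^sub>0 nat) = Poly_Mapping.keys a \<union> Poly_Mapping.keys b"
  by (auto simp: in_keys_iff lookup_add)

lemma prod_indicator:
  "finite K \<Longrightarrow> (\<Prod>i\<in>K. indicator S i :: 'b :: comm_semiring_1) = of_bool (K \<subseteq> S)"
  by (induction K rule: finite_induct) auto

text \<open>On 0/1 points x_i^k = x_i, so multilinearization is plain evaluation and hence multiplicative.\<close>

lemma multilin_eval_mult_indicator:
  "multilin_eval (p * q) (indicator S) = multilin_eval p (indicator S) * multilin_eval q (indicator S)"
proof -
  let ?single = "\<lambda>p a. Poly_Mapping.single a (Poly_Mapping.lookup p a)"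
  let ?val = "\<lambda>a. (\<Prod>i\<in>Poly_Mapping.keys a. indicator S i :: real)"
  have "p * q = (\<Sum>a\<in>Poly_Mapping.keys p. \<Sum>b\<in>Poly_Mapping.keys q. ?single p a * ?single q b)"
    by (subst poly_mapping_eq_sum_single[of p], subst poly_mapping_eq_sum_single[of q])
       (simp add: sum_product)
  then have "multilin_eval (p * q) (indicator S) = (\<Sum>a\<in>Poly_Mapping.keys p. \<Sum>b\<in>Poly_Mapping.keys q.
      Poly_Mapping.lookup p a * ?val a * (Poly_Mapping.lookup q b * ?val b))"
    by (simp add: multilin_eval_sum mult_single multilin_eval_single keys_add_nat prod_indicator
                  of_bool_conj mult_ac)
  also have "\<dots> = multilin_eval p (indicator S) * multilin_eval q (indicator S)"
    by (simp add: multilin_eval_def sum_product)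
  finally show ?thesis .
qed

lemma multilin_eval_one: "multilin_eval 1 x = 1"
  by (simp add: multilin_eval_def)

lemma multilin_eval_power_indicator:
  "multilin_eval (p ^ l) (indicator S) = multilin_eval p (indicator S) ^ l"
  by (induction l) (simp_all add: multilin_eval_mult_indicator multilin_eval_one)

lemma multilin_eval_f_hat_poly_indicator:
  "multilin_eval (f_hat_poly L J P r) (indicator S) = (\<Sum>j = 1..J. h_hat L (\<Sum>i\<in>P j. r i * indicator S i))"
  unfolding f_hat_poly_def h_hat_def
  by (simp add: multilin_eval_sum multilin_eval_mult_indicator multilin_eval_const
                multilin_eval_power_indicator multilin_eval_diff multilin_eval_var)

definition mp_vars :: "mpoly \<Rightarrow> nat set" where
  "mp_vars p = (\<Union>m\<in>Poly_Mapping.keys p. Poly_Mapping.keys m)"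

lemma mp_vars_add: "mp_vars (p + q) \<subseteq> mp_vars p \<union> mp_vars q"
  using keys_add[of p q] by (auto simp: mp_vars_def)

lemma mp_vars_diff: "mp_vars (p - q) \<subseteq> mp_vars p \<union> mp_vars q"
  using keys_diff[of p q] by (auto simp: mp_vars_def)

lemma mp_vars_mult: "mp_vars (p * q) \<subseteq> mp_vars p \<union> mp_vars q"
  using keys_mult[of p q] by (force simp: mp_vars_def keys_add_nat)

lemma mp_vars_power: "mp_vars (p ^ l) \<subseteq> mp_vars p"
proof (induction l)
  case (Suc l)
  then show ?case using mp_vars_mult[of p "p ^ l"] by auto
qed (simp add: mp_vars_def)

lemma mp_vars_sum_subset:
  "(\<And>j. j \<in> A \<Longrightarrow> mp_vars (p j) \<subseteq> V) \<Longrightarrow> mp_vars (\<Sum>j\<in>A. p j) \<subseteq> V"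
proof (induction A rule: infinite_finite_induct)
  case (insert j A)
  then show ?case using mp_vars_add[of "p j" "sum p A"] by auto
qed (simp_all add: mp_vars_def)

lemma mp_vars_const: "mp_vars (mp_const c) = {}"
  by (simp add: mp_vars_def mp_const_def)

lemma mp_vars_var: "mp_vars (mp_var i) = {i}"
  by (simp add: mp_vars_def mp_var_def)

lemma mp_vars_f_hat_poly: "mp_vars (f_hat_poly L J P r) \<subseteq> (\<Union>j\<in>{1..J}. P j)"
  unfolding f_hat_poly_def
proof (intro mp_vars_sum_subset)
  fix j l assume "j \<in> {1..J}"
  let ?q = "(\<Sum>i\<in>P j. mp_const (r i) * mp_var i) - mp_const (1/2)"
  have "mp_vars (\<Sum>i\<in>P j. mp_const (r i) * mp_var i) \<subseteq> P j"
    using mp_vars_mult by (intro mp_vars_sum_subset) (force simp: mp_vars_const mp_vars_var)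
  then have "mp_vars ?q \<subseteq> P j"
    using mp_vars_diff by (force simp: mp_vars_const)
  then have "mp_vars (mp_const (taylor_coeff l) * ?q ^ l) \<subseteq> P j"
    using mp_vars_mult mp_vars_power by (force simp: mp_vars_const)
  then show "mp_vars (mp_const (taylor_coeff l) * ?q ^ l) \<subseteq> (\<Union>j\<in>{1..J}. P j)"
    using \<open>j \<in> {1..J}\<close> by blast
qed

section \<open>Multilinear relaxation and expected marginal gains\<close>

definition bernoulli_weight :: "'a set \<Rightarrow> 'a set \<Rightarrow> ('a \<Rightarrow> real) \<Rightarrow> real" where
  "bernoulli_weight V S y = (\<Prod>i\<in>S. y i) * (\<Prod>i\<in>V - S. 1 - y i)"

lemma multilinear_relaxation_eq_sum_bernoulli_weight:
  "multilinear_relaxation V f y = (\<Sum>S\<in>Pow V. bernoulli_weight V S y * f (indicator S))"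
  by (simp add: multilinear_relaxation_def bernoulli_weight_def indicator_def[abs_def] of_bool_def)

lemma bernoulli_weight_nonneg:
  "S \<subseteq> V \<Longrightarrow> (\<And>i. i \<in> V \<Longrightarrow> 0 \<le> y i \<and> y i \<le> 1) \<Longrightarrow> 0 \<le> bernoulli_weight V S y"
  unfolding bernoulli_weight_def by (intro mult_nonneg_nonneg prod_nonneg) auto

lemma bernoulli_weight_insert:
  assumes "finite V" "i \<notin> V" "S \<subseteq> V"
  shows "bernoulli_weight (insert i V) (insert i S) y = y i * bernoulli_weight V S y"
    and "bernoulli_weight (insert i V) S y = (1 - y i) * bernoulli_weight V S y"
proof -
  have "finite S" "i \<notin> S" "insert i V - insert i S = V - S" "insert i V - S = insert i (V - S)"
    using assms finite_subset by auto
  then show "bernoulli_weight (insert i V) (insert i S) y = y i * bernoulli_weight V S y"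
    and "bernoulli_weight (insert i V) S y = (1 - y i) * bernoulli_weight V S y"
    using assms by (simp_all add: bernoulli_weight_def)
qed

lemma multilinear_relaxation_insert:
  assumes "finite V" "i \<notin> V"
  shows "multilinear_relaxation (insert i V) f y =
     (\<Sum>S\<in>Pow V. bernoulli_weight V S y * (y i * f (indicator (insert i S)) + (1 - y i) * f (indicator S)))"
proof -
  let ?g = "\<lambda>S. bernoulli_weight (insert i V) S y * f (indicator S)"
  have "multilinear_relaxation (insert i V) f y = sum ?g (Pow V \<union> insert i ` Pow V)"
    by (simp add: multilinear_relaxation_eq_sum_bernoulli_weight Pow_insert)
  also have "\<dots> = sum ?g (Pow V) + sum ?g (insert i ` Pow V)"
    using assms by (intro sum.union_disjoint) auto
  also have "\<dots> = sum ?g (Pow V) + (\<Sum>S\<in>Pow V. ?g (insert i S))"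
    using assms by (subst sum.reindex) (auto simp: inj_on_def)
  also have "\<dots> = (\<Sum>S\<in>Pow V. (1 - y i) * bernoulli_weight V S y * f (indicator S)) +
      (\<Sum>S\<in>Pow V. y i * bernoulli_weight V S y * f (indicator (insert i S)))"
    using assms by (intro arg_cong2[where f = "(+)"] sum.cong) (simp_all add: bernoulli_weight_insert)
  also have "\<dots> = (\<Sum>S\<in>Pow V. bernoulli_weight V S y *
                    (y i * f (indicator (insert i S)) + (1 - y i) * f (indicator S)))"
    by (simp add: sum.distrib[symmetric] distrib_left mult_ac add.commute)
  finally show ?thesis .
qed

lemma sum_bernoulli_weight: "finite V \<Longrightarrow> (\<Sum>S\<in>Pow V. bernoulli_weight V S y) = 1"
  using prod_add[of V y "\<lambda>i. 1 - y i"] by (simp add: bernoulli_weight_def)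

lemma bernoulli_weight_union:
  assumes "finite V" "K \<subseteq> V" "T \<subseteq> V - K"
  shows "bernoulli_weight V (K \<union> T) y = (\<Prod>k\<in>K. y k) * bernoulli_weight (V - K) T y"
proof -
  have "finite K" "finite T"
    using assms rev_finite_subset[of V K] rev_finite_subset[of V T] by auto
  moreover have "K \<inter> T = {}" "V - (K \<union> T) = V - K - T"
    using assms by auto
  ultimately show ?thesis
    by (simp add: bernoulli_weight_def prod.union_disjoint mult_ac)
qed

lemma multilinear_relaxation_monomial:
  assumes "finite V" "K \<subseteq> V"
  shows "multilinear_relaxation V (\<lambda>x. \<Prod>k\<in>K. x k) y = (\<Prod>k\<in>K. y k)"
proof -
  have "finite K" using assms finite_subset by blast
  have "multilinear_relaxation V (\<lambda>x. \<Prod>k\<in>K. x k) y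
      = (\<Sum>S\<in>Pow V \<inter> {S. K \<subseteq> S}. bernoulli_weight V S y)"
    using assms \<open>finite K\<close> by (simp add: multilinear_relaxation_eq_sum_bernoulli_weight prod_indicator)
  also have "Pow V \<inter> {S. K \<subseteq> S} = (\<union>) K ` Pow (V - K)"
  proof
    show "Pow V \<inter> {S. K \<subseteq> S} \<subseteq> (\<union>) K ` Pow (V - K)"
    proof
      fix S assume "S \<in> Pow V \<inter> {S. K \<subseteq> S}"
      then have "S = K \<union> (S - K)" "S - K \<in> Pow (V - K)" by auto
      then show "S \<in> (\<union>) K ` Pow (V - K)" by blast
    qed
  qed (use assms in auto)
  also have "sum (\<lambda>S. bernoulli_weight V S y) ((\<union>) K ` Pow (V - K))
      = (\<Sum>T\<in>Pow (V - K). bernoulli_weight V (K \<union> T) y)"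
    by (rule sum.reindex_cong[where l = "(\<union>) K"]) (auto simp: inj_on_def)
  also have "\<dots> = (\<Prod>k\<in>K. y k) * (\<Sum>T\<in>Pow (V - K). bernoulli_weight (V - K) T y)"
    using assms by (simp add: bernoulli_weight_union sum_distrib_left)
  also have "\<dots> = (\<Prod>k\<in>K. y k)"
    using assms by (simp add: sum_bernoulli_weight)
  finally show ?thesis .
qed

lemma multilinear_relaxation_multilin_eval:
  assumes "finite V" "mp_vars p \<subseteq> V"
  shows "multilinear_relaxation V (multilin_eval p) y = multilin_eval p y"
proof -
  have "multilinear_relaxation V (multilin_eval p) y
      = (\<Sum>m\<in>Poly_Mapping.keys p. Poly_Mapping.lookup p m *
           multilinear_relaxation V (\<lambda>x. \<Prod>i\<in>Poly_Mapping.keys m. x i) y)"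
    by (simp add: multilinear_relaxation_eq_sum_bernoulli_weight multilin_eval_def
                  sum_distrib_left mult_ac sum.swap[of _ "Pow V"])
  also have "\<dots> = multilin_eval p y"
    unfolding multilin_eval_def using assms
    by (intro sum.cong refl arg_cong2[where f = "(*)"] multilinear_relaxation_monomial)
       (auto simp: mp_vars_def)
  finally show ?thesis .
qed

definition expected_marginal_gain ::
  "nat set \<Rightarrow> ((nat \<Rightarrow> real) \<Rightarrow> real) \<Rightarrow> nat \<Rightarrow> (nat \<Rightarrow> real) \<Rightarrow> real" where
  "expected_marginal_gain V f i y = (\<Sum>S\<in>Pow (V - {i}).
      bernoulli_weight (V - {i}) S y * (f (indicator (insert i S)) - f (indicator S)))"

lemma multilinear_relaxation_fun_upd:
  assumes "finite V" "i \<in> V"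
  shows "multilinear_relaxation V f (y(i := t)) =
    multilinear_relaxation V f (y(i := 0)) + t * expected_marginal_gain V f i y"
proof -
  define W where "W = V - {i}"
  have weight: "bernoulli_weight W S (y(i := t)) = bernoulli_weight W S y" if "S \<in> Pow W" for S t
    using that unfolding W_def bernoulli_weight_def by (intro arg_cong2[where f = "(*)"] prod.cong) auto
  have "multilinear_relaxation V f (y(i := t)) = (\<Sum>S\<in>Pow W.
      bernoulli_weight W S y * (t * f (indicator (insert i S)) + (1 - t) * f (indicator S)))" for t
    using multilinear_relaxation_insert[of W i f "y(i := t)"] assms
    by (simp add: W_def insert_absorb weight[unfolded W_def])
  then show ?thesis
    by (simp add: expected_marginal_gain_def W_def[symmetric] sum_distrib_left
                  sum.distrib[symmetric] sum_subtractf[symmetric] algebra_simps)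
qed

lemma partial_multilinear_relaxation:
  assumes "finite V" "i \<in> V"
  shows "partial i (multilinear_relaxation V f) y = expected_marginal_gain V f i y"
proof -
  have "((\<lambda>t. multilinear_relaxation V f (y(i := t))) has_field_derivative
          expected_marginal_gain V f i y) (at (y i))"
    by (subst multilinear_relaxation_fun_upd[OF assms, abs_def]) (auto intro!: derivative_eq_intros)
  then show ?thesis
    unfolding partial_def by (rule DERIV_imp_deriv)
qed

lemma poly_grad_est_eq_expected_marginal_gain:
  assumes "finite V" "i \<in> V" "mp_vars p \<subseteq> V"
  shows "poly_grad_est p i y = expected_marginal_gain V (multilin_eval p) i y"
  using multilinear_relaxation_fun_upd[OF assms(1,2), of "multilin_eval p" y 1]
  by (simp add: poly_grad_est_def multilinear_relaxation_multilin_eval assms)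

lemma expected_marginal_gain_diff:
  "expected_marginal_gain V f i y - expected_marginal_gain V g i y =
   expected_marginal_gain V (\<lambda>x. f x - g x) i y"
  by (simp add: expected_marginal_gain_def sum_subtractf[symmetric] algebra_simps)

lemma abs_expected_marginal_gain_le:
  assumes "finite V" "\<And>j. j \<in> V \<Longrightarrow> 0 \<le> y j \<and> y j \<le> 1"
    and "\<And>S. S \<subseteq> V - {i} \<Longrightarrow> \<bar>f (indicator (insert i S)) - f (indicator S)\<bar> \<le> B"
  shows "\<bar>expected_marginal_gain V f i y\<bar> \<le> B"
proof -
  have weight_nonneg: "0 \<le> bernoulli_weight (V - {i}) S y" if "S \<subseteq> V - {i}" for S
    using assms(2) by (intro bernoulli_weight_nonneg that) auto
  have "\<bar>expected_marginal_gain V f i y\<bar> \<le> (\<Sum>S\<in>Pow (V - {i}).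
      \<bar>bernoulli_weight (V - {i}) S y * (f (indicator (insert i S)) - f (indicator S))\<bar>)"
    unfolding expected_marginal_gain_def by (rule sum_abs)
  also have "\<dots> = (\<Sum>S\<in>Pow (V - {i}).
      bernoulli_weight (V - {i}) S y * \<bar>f (indicator (insert i S)) - f (indicator S)\<bar>)"
    by (intro sum.cong refl) (simp add: abs_mult weight_nonneg)
  also have "\<dots> \<le> (\<Sum>S\<in>Pow (V - {i}). bernoulli_weight (V - {i}) S y * B)"
    using assms(3) by (intro sum_mono mult_left_mono) (auto intro: weight_nonneg)
  also have "\<dots> = B"
    using assms(1) by (simp add: sum_distrib_right[symmetric] sum_bernoulli_weight)
  finally show ?thesis .
qed

section \<open>The gradient estimation error\<close>

lemma L2_set_le_sqrt_card_mult:
  assumes "\<And>i. i \<in> A \<Longrightarrow> \<bar>f i\<bar> \<le> B" "0 \<le> B"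
  shows "L2_set f A \<le> sqrt (card A) * B"
proof -
  have "L2_set f A = L2_set (\<lambda>i. \<bar>f i\<bar>) A"
    by (simp add: L2_set_def)
  also have "\<dots> \<le> L2_set (\<lambda>_. B) A"
    using assms by (intro L2_set_mono) auto
  also have "\<dots> = sqrt (card A) * B"
    using assms by (simp add: L2_set_constant)
  finally show ?thesis .
qed

lemma sum_weighted_indicator_bounds:
  fixes r :: "'a \<Rightarrow> real"
  assumes "finite V" "A \<subseteq> V" "\<And>k. k \<in> V \<Longrightarrow> 0 \<le> r k" "sum r V \<le> 1"
  shows "0 \<le> (\<Sum>k\<in>A. r k * indicator T k)" "(\<Sum>k\<in>A. r k * indicator T k) \<le> 1"
proof -
  show "0 \<le> (\<Sum>k\<in>A. r k * indicator T k)"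
    using assms by (intro sum_nonneg) auto
  have "(\<Sum>k\<in>A. r k * indicator T k) \<le> sum r A"
    using assms by (intro sum_mono) (auto simp: mult_left_le)
  also have "\<dots> \<le> sum r V"
    using assms by (intro sum_mono2) auto
  finally show "(\<Sum>k\<in>A. r k * indicator T k) \<le> 1"
    using assms by linarith
qed

lemma f_obj_f_hat_error_marginal_bound:
  fixes L J :: nat and P :: "nat \<Rightarrow> nat set" and r :: "nat \<Rightarrow> real"
  assumes "finite V" "\<And>j. j \<in> {1..J} \<Longrightarrow> P j \<subseteq> V" "disjoint_family_on P {1..J}"
    and "\<And>k. k \<in> V \<Longrightarrow> 0 \<le> r k" "sum r V \<le> 1"
    and "j \<in> {1..J}" "i \<in> P j"
  defines "err \<equiv> \<lambda>T. f_obj J P r (indicator T) - multilin_eval (f_hat_poly L J P r) (indicator T)"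
  shows "\<bar>err (insert i S) - err S\<bar> \<le> 1 / (real (L + 1) * 2 ^ L)"
proof -
  define s where "s j' T = (\<Sum>k\<in>P j'. r k * indicator T k)" for j' T
  define e where "e x = h x - h_hat L x" for x
  have e_bound: "\<bar>e (s j T)\<bar> \<le> 1 / (real (L + 1) * 2 ^ (L + 1))" for T
    unfolding e_def s_def using assms(1-6)
    by (intro h_hat_error_bound sum_weighted_indicator_bounds) auto
  have err: "err T = (\<Sum>j'=1..J. e (s j' T))" for T
    by (simp add: err_def f_obj_def multilin_eval_f_hat_poly_indicator e_def s_def sum_subtractf)
  have unchanged: "s j' (insert i S) = s j' S" if "j' \<in> {1..J} - {j}" for j'
  proof -
    have "i \<notin> P j'"
      using assms(3,6,7) that unfolding disjoint_family_on_def by blast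
    then show ?thesis
      unfolding s_def by (intro sum.cong refl) (auto simp: indicator_def)
  qed
  have "err (insert i S) - err S = (\<Sum>j'\<in>{1..J}. e (s j' (insert i S)) - e (s j' S))"
    by (simp add: err sum_subtractf)
  also have "\<dots> = e (s j (insert i S)) - e (s j S)"
    using assms(6) by (subst sum.remove[of _ j]) (auto simp: unchanged)
  also have "\<bar>\<dots>\<bar> \<le> 2 * (1 / (real (L + 1) * 2 ^ (L + 1)))"
    using e_bound[of "insert i S"] e_bound[of S] by linarith
  also have "\<dots> = 1 / (real (L + 1) * 2 ^ L)"
    by simp
  finally show ?thesis .
qed

lemma abs_partial_minus_poly_grad_est_le:
  fixes L J :: nat and P :: "nat \<Rightarrow> nat set" and r y :: "nat \<Rightarrow> real"
  assumes "finite V" "(\<Union>j\<in>{1..J}. P j) = V" "disjoint_family_on P {1..J}"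
    and "\<And>k. k \<in> V \<Longrightarrow> 0 \<le> r k" "sum r V \<le> 1"
    and "\<And>k. k \<in> V \<Longrightarrow> 0 \<le> y k \<and> y k \<le> 1" "i \<in> V"
  shows "\<bar>partial i (multilinear_relaxation V (f_obj J P r)) y - poly_grad_est (f_hat_poly L J P r) i y\<bar>
         \<le> 1 / (real (L + 1) * 2 ^ L)"
proof -
  let ?F = "f_obj J P r" and ?p = "f_hat_poly L J P r"
  obtain j where "j \<in> {1..J}" "i \<in> P j"
    using assms(2,7) by blast
  have "mp_vars ?p \<subseteq> V"
    unfolding assms(2)[symmetric] by (rule mp_vars_f_hat_poly)
  then have "partial i (multilinear_relaxation V ?F) y - poly_grad_est ?p i y
      = expected_marginal_gain V (\<lambda>x. ?F x - multilin_eval ?p x) i y"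
    using assms(1,7)
    by (simp add: partial_multilinear_relaxation poly_grad_est_eq_expected_marginal_gain
                  expected_marginal_gain_diff)
  also have "\<bar>\<dots>\<bar> \<le> 1 / (real (L + 1) * 2 ^ L)"
  proof (rule abs_expected_marginal_gain_le[OF assms(1,6)])
    have "P j' \<subseteq> V" if "j' \<in> {1..J}" for j'
      using assms(2) that by blast
    then show "\<bar>?F (indicator (insert i S)) - multilin_eval ?p (indicator (insert i S))
              - (?F (indicator S) - multilin_eval ?p (indicator S))\<bar> \<le> 1 / (real (L + 1) * 2 ^ L)" for S
      using f_obj_f_hat_error_marginal_bound[OF assms(1) _ assms(3-5) \<open>j \<in> {1..J}\<close> \<open>i \<in> P j\<close>]
      by blast
  qed
  finally show ?thesis .
qed

theorem theorem3:
  fixes n J L :: nat and P :: "nat \<Rightarrow> nat set" and r y :: "nat \<Rightarrow> real"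
  assumes part_cover: "(\<Union>j\<in>{1..J}. P j) = {1..n}"
      and part_disj: "\<forall>j\<in>{1..J}. \<forall>k\<in>{1..J}. j \<noteq> k \<longrightarrow> P j \<inter> P k = {}"
      and part_ne: "\<forall>j\<in>{1..J}. P j \<noteq> {}"
      and r_range: "\<forall>i\<in>{1..n}. 0 \<le> r i \<and> r i \<le> 1"
      and r_sum: "(\<Sum>i\<in>{1..n}. r i) = 1"
      and y_range: "\<forall>i\<in>{1..n}. 0 \<le> y i \<and> y i \<le> 1"
  shows "sqrt (\<Sum>i\<in>{1..n}.
            (partial i (multilinear_relaxation {1..n} (f_obj J P r)) y
             - poly_grad_est (f_hat_poly L J P r) i y)\<^sup>2)
         \<le> sqrt (real n) / (real (L + 1) * 2 ^ L)"
proof -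
  \<comment> \<open>Blocks not containing i cancel in every marginal gain.\<close>
  have "\<bar>partial i (multilinear_relaxation {1..n} (f_obj J P r)) y - poly_grad_est (f_hat_poly L J P r) i y\<bar>
        \<le> 1 / (real (L + 1) * 2 ^ L)" if "i \<in> {1..n}" for i
    using part_cover part_disj r_range r_sum y_range that
    by (intro abs_partial_minus_poly_grad_est_le) (auto simp: disjoint_family_on_def)
  then have "L2_set (\<lambda>i. partial i (multilinear_relaxation {1..n} (f_obj J P r)) y
                          - poly_grad_est (f_hat_poly L J P r) i y) {1..n}
             \<le> sqrt (card {1..n}) * (1 / (real (L + 1) * 2 ^ L))"
    by (intro L2_set_le_sqrt_card_mult) auto
  then show ?thesis
    by (simp add: L2_set_def)
qed

end
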